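(* For any finite alphabet $\mathfrak{G}$, the $\mathfrak{G}$-prefix poset is a meet-semilattice for the operation $\wedge$. Moreover, each interval $[\mathfrak{s},\mathfrak{t}]$ of this poset is a distributive lattice for the operations $\wedge$ and $\vee$.
   Context: $\mathfrak{G}$ is a finite alphabet (letters with arities $\geq 1$). A $\mathfrak{G}$-tree is either the leaf (the tree with no internal node) or $\mathtt{a}[\mathfrak{t}_1,\dots,\mathfrak{t}_{|\mathtt{a}|}]$, a root decorated by $\mathtt{a}\in\mathfrak{G}$ with children $\mathfrak{t}_1,\dots,\mathfrak{t}_{|\mathtt{a}|}$. The $\mathfrak{G}$-prefix poset is the set of $\mathfrak{G}$-trees ordered by $\mathfrak{s}\preceq\mathfrak{t}$ iff $\mathfrak{s}$ is a prefix of $\mathfrak{t}$, i.e. $\mathfrak{t}$ is obtained by grafting some $\mathfrak{G}$-trees onto the leaves of $\mathfrak{s}$. The intersection $\wedge$ is defined by: $\mathfrak{t}\wedge\text{leaf} = \text{leaf} = \text{leaf}\wedge\mathfrak{t}$; $\mathtt{a}[\dots]\wedge\mathtt{b}[\dots] = \text{leaf}$ if $\mathtt{a}\neq\mathtt{b}$; $\mathtt{a}[\mathfrak{t}_1,\dots,\mathfrak{t}_k]\wedge\mathtt{a}[\mathfrak{t}'_1,\dots,\mathfrak{t}'_k] = \mathtt{a}[\mathfrak{t}_1\wedge\mathfrak{t}'_1,\dots,\mathfrak{t}_k\wedge\mathfrak{t}'_k]$. The partial union $\vee$ is defined by: $\mathfrak{t}\vee\text{leaf} = \mathfrak{t} =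 \text{leaf}\vee\mathfrak{t}$; $\mathtt{a}[\mathfrak{t}_1,\dots,\mathfrak{t}_k]\vee\mathtt{a}[\mathfrak{t}'_1,\dots,\mathfrak{t}'_k] = \mathtt{a}[\mathfrak{t}_1\vee\mathfrak{t}'_1,\dots,\mathfrak{t}_k\vee\mathfrak{t}'_k]$; and it is undefined on two trees whose roots have different decorations. *)

theory Defs
  imports Main
begin

text \<open>Trees over an alphabet: Leaf is the tree with no internal node;
  Node a ts is a root decorated by the letter a with children ts.\<close>
datatype 'a gtree = Leaf | Node 'a "'a gtree list"

inductive is_gtree :: "'a set \<Rightarrow> ('a \<Rightarrow> nat) \<Rightarrow> 'a gtree \<Rightarrow> bool" for G ar where
  leaf: "is_gtree G ar Leaf"
| node: "\<lbrakk>a \<in> G; length ts = ar a; \<forall>t \<in> set ts. is_gtree G ar t\<rbrakk> \<Longrightarrow> is_gtree G ar (Node a ts)"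

text \<open>Prefix order: t is obtained from s by grafting trees onto the leaves of s.\<close>
inductive prefix_tree :: "'a gtree \<Rightarrow> 'a gtree \<Rightarrow> bool" (infix "\<preceq>\<^sub>t" 50) where
  leaf: "Leaf \<preceq>\<^sub>t t"
| node: "list_all2 prefix_tree ss ts \<Longrightarrow> Node a ss \<preceq>\<^sub>t Node a ts"

function (sequential) meet :: "'a gtree \<Rightarrow> 'a gtree \<Rightarrow> 'a gtree" (infixl "\<sqinter>\<^sub>t" 70) where
  "meet Leaf t = Leaf"
| "meet (Node a ss) Leaf = Leaf"
| "meet (Node a ss) (Node b ts) =
     (if a = b \<and> length ss = length ts
      then Node a (map (\<lambda>(x, y). meet x y) (zip ss ts)) else Leaf)"
  by pat_completeness auto
termination by (relation "measure (\<lambda>(s, t). size s)")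
  (auto dest!: set_zip_leftD simp: less_Suc_eq_le intro: size_list_estimation')

function (sequential) join :: "'a gtree \<Rightarrow> 'a gtree \<Rightarrow> 'a gtree option" where
  "join Leaf t = Some t"
| "join (Node a ss) Leaf = Some (Node a ss)"
| "join (Node a ss) (Node b ts) =
     (if a = b \<and> length ss = length ts
      then map_option (Node a) (those (map (\<lambda>(x, y). join x y) (zip ss ts))) else None)"
  by pat_completeness auto
termination by (relation "measure (\<lambda>(s, t). size s)")
  (auto dest!: set_zip_leftD simp: less_Suc_eq_le intro: size_list_estimation')

definition interval :: "'a set \<Rightarrow> ('a \<Rightarrow> nat) \<Rightarrow> 'a gtree \<Rightarrow> 'a gtree \<Rightarrow> 'a gtree set" where
  "interval G ar s t = {u. is_gtree G ar u \<and> s \<preceq>\<^sub>t u \<and> u \<preceq>\<^sub>t t}"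

end

(*
  Prefix order, intersection and union all work letter by letter: two trees are compared
  at their roots and, if the root letters agree, recursively on corresponding children.
  The union of two trees is defined as soon as they have a common upper bound, and then it
  is their least upper bound; as all trees of an interval [s, t] lie below t, the interval
  is closed under both operations. Intersection distributes over every defined union,
  whether or not the trees involved share an upper bound.
*)

theory Submission
  imports Defs
begin

lemma Leaf_prefix_tree [simp]: "Leaf \<preceq>\<^sub>t t"
  by (rule prefix_tree.leaf)

lemma Node_prefix_tree_Node_iff [simp]:
  "Node a ss \<preceq>\<^sub>t Node b ts \<longleftrightarrow> a = b \<and> list_all2 prefix_tree ss ts"
  by (auto elim: prefix_tree.cases intro: prefix_tree.node)

lemma prefix_tree_Leaf_iff [simp]: "t \<preceq>\<^sub>t Leaf \<longleftrightarrow> t = Leaf"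
  by (auto elim: prefix_tree.cases)

lemma Node_prefix_tree_iff:
  "Node a ss \<preceq>\<^sub>t t \<longleftrightarrow> (\<exists>ts. t = Node a ts \<and> list_all2 prefix_tree ss ts)"
  by (cases t) auto

lemma prefix_tree_refl: "t \<preceq>\<^sub>t t"
  by (induction t) (auto intro: list.rel_refl_strong)

lemma prefix_tree_trans: "r \<preceq>\<^sub>t s \<Longrightarrow> s \<preceq>\<^sub>t t \<Longrightarrow> r \<preceq>\<^sub>t t"
proof (induction r s arbitrary: t rule: prefix_tree.induct)
  case (node ss ts a)
  then obtain us where "t = Node a us" "list_all2 prefix_tree ts us"
    by (auto simp: Node_prefix_tree_iff)
  moreover have "list_all2 prefix_tree ss us"
    by (rule list_all2_trans[OF _ node.IH \<open>list_all2 prefix_tree ts us\<close>]) blast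
  ultimately show ?case
    by simp
qed simp

lemma prefix_tree_antisym: "s \<preceq>\<^sub>t t \<Longrightarrow> t \<preceq>\<^sub>t s \<Longrightarrow> s = t"
proof (induction s t rule: prefix_tree.induct)
  case (node ss ts a)
  from node.prems have converse: "list_all2 prefix_tree ts ss"
    by simp
  have "ss = ts"
    by (rule list_all2_antisym[OF _ node.IH converse]) blast
  then show ?case
    by simp
qed simp

lemma is_gtree_prefix_tree: "s \<preceq>\<^sub>t t \<Longrightarrow> is_gtree G ar t \<Longrightarrow> is_gtree G ar s"
proof (induction s t rule: prefix_tree.induct)
  case (node ss ts a)
  from node.prems have "a \<in> G" "length ts = ar a" "\<forall>t \<in> set ts. is_gtree G ar t"
    by (auto elim: is_gtree.cases)
  with node.IH show ?case
    by (force intro!: is_gtree.node simp: list_all2_conv_all_nth in_set_conv_nth)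
qed (rule is_gtree.leaf)

lemma meet_Leaf_right [simp]: "t \<sqinter>\<^sub>t Leaf = Leaf"
  by (cases t) simp_all

lemma meet_prefix_left: "s \<sqinter>\<^sub>t t \<preceq>\<^sub>t s"
proof (induction s arbitrary: t)
  case (Node a ss)
  then show ?case
    by (cases t) (auto simp: list_all2_conv_all_nth)
qed simp

lemma meet_prefix_right: "s \<sqinter>\<^sub>t t \<preceq>\<^sub>t t"
proof (induction s arbitrary: t)
  case (Node a ss)
  then show ?case
    by (cases t) (auto simp: list_all2_conv_all_nth)
qed simp

lemma prefix_meet_greatest: "u \<preceq>\<^sub>t s \<Longrightarrow> u \<preceq>\<^sub>t t \<Longrightarrow> u \<preceq>\<^sub>t s \<sqinter>\<^sub>t t"
proof (induction u arbitrary: s t)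
  case (Node a us)
  then obtain ss ts where "s = Node a ss" "t = Node a ts"
    "list_all2 prefix_tree us ss" "list_all2 prefix_tree us ts"
    by (auto simp: Node_prefix_tree_iff)
  with Node.IH show ?case
    by (auto simp: list_all2_conv_all_nth)
qed simp

lemma those_eq_Some_iff: "those xs = Some ys \<longleftrightarrow> xs = map Some ys"
  by (induction xs arbitrary: ys) (auto split: option.splits)

lemma those_eq_None_iff: "those xs = None \<longleftrightarrow> None \<in> set xs"
  by (induction xs) (auto split: option.splits)

lemma join_Leaf_right [simp]: "join t Leaf = Some t"
  by (cases t) simp_all

lemma join_Node_Node_eq_Some_iff:
  "join (Node a vs) (Node b ws) = Some x \<longleftrightarrow>
     a = b \<and> length vs = length ws \<and>
     (\<exists>xs. x = Node a xs \<and> length xs = length vs \<and>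
        (\<forall>i < length vs. join (vs ! i) (ws ! i) = Some (xs ! i)))"
proof -
  have "those (map2 join vs ws) = Some xs \<longleftrightarrow>
      length xs = length vs \<and> (\<forall>i < length vs. join (vs ! i) (ws ! i) = Some (xs ! i))"
    if "length vs = length ws" for xs
    using that by (auto simp: those_eq_Some_iff list_eq_iff_nth_eq)
  then show ?thesis
    by auto
qed

lemma join_Node_Node_neq_None_iff:
  "join (Node a vs) (Node b ws) \<noteq> None \<longleftrightarrow>
     a = b \<and> length vs = length ws \<and> (\<forall>i < length vs. join (vs ! i) (ws ! i) \<noteq> None)"
proof -
  have "those (map2 join vs ws) \<noteq> None \<longleftrightarrow> (\<forall>i < length vs. join (vs ! i) (ws ! i) \<noteq> None)"
    if "length vs = length ws" for xs
    using that by (simp only: those_eq_None_iff in_set_conv_nth) auto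
  then show ?thesis
    by (auto simp del: not_None_eq)
qed

declare join.simps(3) [simp del]

lemma join_upper: "join v w = Some x \<Longrightarrow> v \<preceq>\<^sub>t x \<and> w \<preceq>\<^sub>t x"
proof (induction v arbitrary: w x)
  case Leaf
  then show ?case
    by (simp add: prefix_tree_refl)
next
  case (Node a vs)
  show ?case
  proof (cases w)
    case Leaf
    with Node.prems show ?thesis
      by (simp add: prefix_tree_refl)
  next
    case w: (Node b ws)
    with Node.prems obtain xs where x: "b = a" "x = Node a xs" "length ws = length vs"
      "length xs = length vs" and joins: "\<forall>i < length vs. join (vs ! i) (ws ! i) = Some (xs ! i)"
      by (auto simp: join_Node_Node_eq_Some_iff)
    have "vs ! i \<preceq>\<^sub>t xs ! i \<and> ws ! i \<preceq>\<^sub>t xs ! i" if "i < length vs" for i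
      using Node.IH[OF nth_mem[OF that]] joins that by blast
    with x w show ?thesis
      by (auto simp: list_all2_conv_all_nth)
  qed
qed

lemma join_least: "join v w = Some x \<Longrightarrow> v \<preceq>\<^sub>t z \<Longrightarrow> w \<preceq>\<^sub>t z \<Longrightarrow> x \<preceq>\<^sub>t z"
proof (induction v arbitrary: w x z)
  case (Node a vs)
  show ?case
  proof (cases w)
    case Leaf
    with Node.prems show ?thesis
      by simp
  next
    case (Node b ws)
    with Node.prems obtain xs zs where x: "x = Node a xs" "z = Node a zs" "length xs = length vs"
      and joins: "\<forall>i < length vs. join (vs ! i) (ws ! i) = Some (xs ! i)"
      and bounds: "list_all2 prefix_tree vs zs" "list_all2 prefix_tree ws zs"
      by (auto simp: join_Node_Node_eq_Some_iff Node_prefix_tree_iff)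
    have "xs ! i \<preceq>\<^sub>t zs ! i" if "i < length vs" for i
      using Node.IH[OF nth_mem[OF that]] joins bounds that by (auto simp: list_all2_conv_all_nth)
    with x bounds show ?thesis
      by (auto simp: list_all2_conv_all_nth)
  qed
qed simp

lemma join_defined_if_bounded: "v \<preceq>\<^sub>t t \<Longrightarrow> w \<preceq>\<^sub>t t \<Longrightarrow> join v w \<noteq> None"
proof (induction v arbitrary: w t)
  case (Node a vs)
  then obtain ts where t: "t = Node a ts" "list_all2 prefix_tree vs ts"
    by (auto simp: Node_prefix_tree_iff)
  show ?case
  proof (cases w)
    case w: (Node b ws)
    with Node.prems t have ws: "b = a" "list_all2 prefix_tree ws ts"
      by auto
    have "join (vs ! i) (ws ! i) \<noteq> None" if "i < length vs" for i
      using Node.IH[OF nth_mem[OF that]] t ws that by (auto simp: list_all2_conv_all_nth)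
    with t ws w show ?thesis
      by (simp add: join_Node_Node_neq_None_iff list_all2_lengthD del: not_None_eq)
  qed simp
qed simp

lemma join_meet_distrib: "join v w = Some x \<Longrightarrow> join (u \<sqinter>\<^sub>t v) (u \<sqinter>\<^sub>t w) = Some (u \<sqinter>\<^sub>t x)"
proof (induction v arbitrary: w x u)
  case (Node a vs)
  show ?case
  proof (cases w)
    case Leaf
    with Node.prems show ?thesis
      by simp
  next
    case w: (Node b ws)
    with Node.prems obtain xs where x: "b = a" "x = Node a xs" "length ws = length vs"
      "length xs = length vs" and joins: "\<forall>i < length vs. join (vs ! i) (ws ! i) = Some (xs ! i)"
      by (auto simp: join_Node_Node_eq_Some_iff)
    show ?thesis
    proof (cases u)
      case u: (Node c us)
      have "join (us ! i \<sqinter>\<^sub>t vs ! i) (us ! i \<sqinter>\<^sub>t ws ! i) = Some (us ! i \<sqinter>\<^sub>t xs ! i)"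
        if "i < length vs" for i
        using Node.IH[OF nth_mem[OF that]] joins that by blast
      with x w u show ?thesis
        by (auto simp: join_Node_Node_eq_Some_iff)
    qed simp
  qed
qed simp

lemma meet_in_interval:
  "u \<in> interval G ar s t \<Longrightarrow> v \<in> interval G ar s t \<Longrightarrow> u \<sqinter>\<^sub>t v \<in> interval G ar s t"
  unfolding interval_def
  by (blast intro: is_gtree_prefix_tree[OF meet_prefix_left] prefix_meet_greatest
      prefix_tree_trans[OF meet_prefix_left])

lemma join_in_interval:
  assumes "is_gtree G ar t" "u \<in> interval G ar s t" "v \<in> interval G ar s t" "join u v = Some x"
  shows "x \<in> interval G ar s t"
proof -
  from assms have "x \<preceq>\<^sub>t t" "u \<preceq>\<^sub>t x"
    by (auto simp: interval_def intro: join_least dest: join_upper)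
  with assms show ?thesis
    by (auto simp: interval_def intro: is_gtree_prefix_tree prefix_tree_trans)
qed

theorem proposition3p5:
  fixes G :: "'a set" and ar :: "'a \<Rightarrow> nat"
  assumes "finite G" and "\<forall>a \<in> G. ar a \<ge> 1"
  shows
    \<comment> \<open>the prefix relation is a partial order on G-trees\<close>
    "(\<forall>t. is_gtree G ar t \<longrightarrow> t \<preceq>\<^sub>t t)
     \<and> (\<forall>s t. is_gtree G ar s \<and> is_gtree G ar t \<and> s \<preceq>\<^sub>t t \<and> t \<preceq>\<^sub>t s \<longrightarrow> s = t)
     \<and> (\<forall>r s t. is_gtree G ar r \<and> is_gtree G ar s \<and> is_gtree G ar t \<and> r \<preceq>\<^sub>t s \<and> s \<preceq>\<^sub>t t \<longrightarrow> r \<preceq>\<^sub>t t)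
     \<comment> \<open>meet-semilattice for the intersection\<close>
     \<and> (\<forall>s t. is_gtree G ar s \<and> is_gtree G ar t \<longrightarrow>
           is_gtree G ar (s \<sqinter>\<^sub>t t) \<and> s \<sqinter>\<^sub>t t \<preceq>\<^sub>t s \<and> s \<sqinter>\<^sub>t t \<preceq>\<^sub>t t \<and>
           (\<forall>u. is_gtree G ar u \<and> u \<preceq>\<^sub>t s \<and> u \<preceq>\<^sub>t t \<longrightarrow> u \<preceq>\<^sub>t s \<sqinter>\<^sub>t t))
     \<comment> \<open>every interval is a distributive lattice for intersection and union\<close>
     \<and> (\<forall>s t. is_gtree G ar s \<and> is_gtree G ar t \<and> s \<preceq>\<^sub>t t \<longrightarrow>
          (\<forall>u \<in> interval G ar s t. \<forall>v \<in> interval G ar s t.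
              u \<sqinter>\<^sub>t v \<in> interval G ar s t
            \<and> (\<forall>z \<in> interval G ar s t. z \<preceq>\<^sub>t u \<and> z \<preceq>\<^sub>t v \<longrightarrow> z \<preceq>\<^sub>t u \<sqinter>\<^sub>t v)
            \<and> (\<exists>x. join u v = Some x \<and> x \<in> interval G ar s t \<and> u \<preceq>\<^sub>t x \<and> v \<preceq>\<^sub>t x
                   \<and> (\<forall>z \<in> interval G ar s t. u \<preceq>\<^sub>t z \<and> v \<preceq>\<^sub>t z \<longrightarrow> x \<preceq>\<^sub>t z)))
        \<and> (\<forall>u \<in> interval G ar s t. \<forall>v \<in> interval G ar s t. \<forall>w \<in> interval G ar s t.
              map_option (\<lambda>x. u \<sqinter>\<^sub>t x) (join v w) = join (u \<sqinter>\<^sub>t v) (u \<sqinter>\<^sub>t w)))"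
proof -
  have join_defined: "\<exists>x. join u v = Some x" if "u \<in> interval G ar s t" "v \<in> interval G ar s t"
    for s t u v
    using that join_defined_if_bounded by (fastforce simp: interval_def)
  have join_lub: "\<exists>x. join u v = Some x \<and> x \<in> interval G ar s t \<and> u \<preceq>\<^sub>t x \<and> v \<preceq>\<^sub>t x
      \<and> (\<forall>z \<in> interval G ar s t. u \<preceq>\<^sub>t z \<and> v \<preceq>\<^sub>t z \<longrightarrow> x \<preceq>\<^sub>t z)"
    if "is_gtree G ar t" "u \<in> interval G ar s t" "v \<in> interval G ar s t" for s t u v
    using join_defined[OF that(2,3)] join_in_interval[OF that] join_upper join_least by blast
  have distrib: "map_option (\<lambda>x. u \<sqinter>\<^sub>t x) (join v w) = join (u \<sqinter>\<^sub>t v) (u \<sqinter>\<^sub>t w)"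
    if "v \<in> interval G ar s t" "w \<in> interval G ar s t" for s t u v w
    using join_defined[OF that] join_meet_distrib by fastforce
  show ?thesis
    by (intro conjI allI impI ballI)
      (blast intro: prefix_tree_refl prefix_tree_antisym prefix_tree_trans meet_prefix_left
        meet_prefix_right prefix_meet_greatest is_gtree_prefix_tree[OF meet_prefix_left]
        meet_in_interval join_lub distrib)+
qed

end
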